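(* Let $(T_n)_{n\ge1}$ be a plane-oriented recursive tree and let $D_{n,j}$ be the degree of node $j$ in $T_n$. For fixed integers $2\le j\le n$ and every $d\in\{1,2,\dots,n-j+1\}$, $$\mathbb{P}(D_{n,j}=d)=\frac{\Gamma(d)\,\Gamma\!\left(j-\tfrac12\right)}{\Gamma\!\left(n-\tfrac12\right)}\sum_{i=0}^{d-1}\frac{(-1)^i\,\Gamma\!\left(n-1-\tfrac{i}{2}\right)}{\Gamma(i+1)\,\Gamma(d-i)\,\Gamma\!\left(j-1-\tfrac{i}{2}\right)},$$ with the convention $1/\Gamma(m)=0$ for nonpositive integers $m$.
   Context: A plane-oriented recursive tree (PORT) is the random sequence of trees $(T_n)_{n\ge1}$ defined as follows. $T_1$ is a single node labeled $1$ (the root). For $n\ge2$, $T_n$ is obtained from $T_{n-1}$ by adding a node labeled $n$ and an edge joining it to a node $i\in\{1,\dots,n-1\}$ of $T_{n-1}$, where, conditionally on $T_1,\dots,T_{n-1}$, node $i$ is chosen with probability $(c_{n-1,i}+1)/(2n-3)$, with $c_{n-1,i}$ the number of children of $i$ in $T_{n-1}$ (nodes previously attached to $i$). $D_{n,j}$ denotes the degree (number of incident edges) of the node labeled $j$ in $T_n$. Equivalently, node $i\ge2$ is chosen with probability $D_{n-1,i}/(2n-3)$ and the root with probability $(D_{n-1,1}+1)/(2n-3)$. *)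

theory Defs
  imports "HOL-Probability.Probability"
begin

text \<open>A plane-oriented recursive tree T_n (n nodes labelled 1..n) is encoded by the list
  of parents of the nodes 2, 3, ..., n: the k-th entry (0-based) is the label of the node to
  which node k+2 was attached.\<close>

definition port_children :: "nat list \<Rightarrow> nat \<Rightarrow> nat" where
  "port_children xs i = count (mset xs) i"

text \<open>Attachment weights when inserting node n into T_{n-1}: node i in {1..n-1} gets weight
  c_{n-1,i} + 1; choosing from the multiset below gives probability (c_{n-1,i}+1)/(2n-3).\<close>

definition port_weights :: "nat list \<Rightarrow> nat \<Rightarrow> nat multiset" where
  "port_weights xs n = mset xs + mset_set {1..<n}"

text \<open>Law of T_n (as parent list).  port 1 is the single root; port 0 is a dummy value.\<close>

fun port :: "nat \<Rightarrow> nat list pmf" where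
  "port 0 = return_pmf []"
| "port (Suc 0) = return_pmf []"
| "port (Suc (Suc m)) =
     bind_pmf (port (Suc m))
       (\<lambda>xs. map_pmf (\<lambda>i. xs @ [i]) (pmf_of_multiset (port_weights xs (Suc (Suc m)))))"

definition port_degree :: "nat list \<Rightarrow> nat \<Rightarrow> nat" where
  "port_degree xs j = port_children xs j + (if j = 1 then 0 else 1)"

end

theory Submission
  imports Defs
begin

(* Let p_m(d) be the probability that node j has degree d in T_m. A node of degree D receives
   the next node with probability D/(2m - 1), hence
     p_(m+1)(d) = p_m(d) (2m - 1 - d)/(2m - 1) + p_m(d - 1) (d - 1)/(2m - 1),   p_j(d) = [d = 1].
   The Gamma quotients of the closed form are a binomial coefficient and a rising factorial
   (1/Gamma vanishes exactly where the rising factorial has a zero factor), which turns it into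
     Gamma(j - 1/2)/Gamma(m - 1/2) * sum_i (-1)^i C(d - 1, i) (j - 1 - i/2)^(rising, m - j).
   Passing from m to m + 1 multiplies the i-th summand by (2m - 2 - i)/(2m - 1); splitting
   2m - 2 - i = (2m - 1 - d) + (d - 1 - i) and absorbing
   C(d - 1, i) (d - 1 - i) = (d - 1) C(d - 2, i) gives the same recurrence. At m = j the sum
   is an alternating binomial sum, equal to [d = 1]. *)

lemma measure_pmf_prob_bind_pmf:
  "measure_pmf.prob (bind_pmf M N) A = (\<integral>x. measure_pmf.prob (N x) A \<partial>M)"
  unfolding measure_pmf_bind
  by (rule measure_pmf.measure_bind[where N="count_space UNIV"])
     (auto simp: space_subprob_algebra measure_pmf.subprob_space_axioms)

lemma size_port_weights: "size (port_weights xs n) = length xs + (n - 1)"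
  by (simp add: port_weights_def)

lemma set_pmf_port:
  assumes "xs \<in> set_pmf (port m)" and "1 \<le> m"
  shows "length xs = m - 1" and "set xs \<subseteq> {1..<m}"
proof -
  have "length xs = m - 1 \<and> set xs \<subseteq> {1..<m}"
    using assms
  proof (induction m arbitrary: xs rule: port.induct)
    case (3 m)
    have "port_weights ys (Suc (Suc m)) \<noteq> {#}" for ys
      using size_port_weights[of ys "Suc (Suc m)"] by auto
    with "3.prems" obtain ys i where ys: "ys \<in> set_pmf (port (Suc m))"
      and "i \<in># port_weights ys (Suc (Suc m))" and "xs = ys @ [i]"
      by auto
    with "3.IH"[OF ys] show ?case by (auto simp: port_weights_def)
  qed simp_all
  then show "length xs = m - 1" and "set xs \<subseteq> {1..<m}" by auto
qed

lemma count_port_weights: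
  assumes "2 \<le> j" and "j < n"
  shows "count (port_weights xs n) j = port_degree xs j"
  using assms by (simp add: port_weights_def port_degree_def port_children_def)

lemma port_degree_snoc:
  "port_degree (xs @ [i]) j = port_degree xs j + (if i = j then 1 else 0)"
  by (simp add: port_degree_def port_children_def)

lemma prob_port_degree_attach:
  assumes xs: "xs \<in> set_pmf (port (Suc k))" and j: "2 \<le> j" "j \<le> Suc k"
  shows "measure_pmf.prob (pmf_of_multiset (port_weights xs (Suc (Suc k))))
           {i. port_degree (xs @ [i]) j = Suc e}
       = indicator {xs. port_degree xs j = Suc e} xs * ((2 * real k - real e) / (2 * real k + 1))
       + indicator {xs. port_degree xs j = e} xs * (real e / (2 * real k + 1))"
proof -
  define W where "W = port_weights xs (Suc (Suc k))"
  have size_W: "size W = 2 * k + 1"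
    using set_pmf_port(1)[OF xs] by (simp add: W_def size_port_weights)
  have "count W j = port_degree xs j"
    using j by (simp add: W_def count_port_weights)
  moreover have "W \<noteq> {#}" using size_W by auto
  ultimately have prob_j:
    "measure_pmf.prob (pmf_of_multiset W) {j} = real (port_degree xs j) / (2 * real k + 1)"
    by (simp add: measure_pmf_single size_W)
  consider "port_degree xs j = Suc e" | "port_degree xs j = e"
    | "port_degree xs j \<noteq> Suc e" "port_degree xs j \<noteq> e" by blast
  then show ?thesis
  proof cases
    case 1
    then have "{i. port_degree (xs @ [i]) j = Suc e} = UNIV - {j}"
      by (auto simp: port_degree_snoc)
    moreover have "measure_pmf.prob (pmf_of_multiset W) (UNIV - {j})
        = 1 - measure_pmf.prob (pmf_of_multiset W) {j}"
      using measure_pmf.prob_compl[of "{j}" "pmf_of_multiset W"] by simp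
    ultimately show ?thesis
      using 1 prob_j by (simp add: W_def[symmetric] field_simps)
  next
    case 2
    then have "{i. port_degree (xs @ [i]) j = Suc e} = {j}"
      by (auto simp: port_degree_snoc)
    with 2 prob_j show ?thesis by (simp add: W_def[symmetric])
  next
    case 3
    then have "{i. port_degree (xs @ [i]) j = Suc e} = {}"
      by (auto simp: port_degree_snoc)
    with 3 show ?thesis by simp
  qed
qed

lemma prob_port_degree_Suc:
  assumes "2 \<le> j" and "j \<le> Suc k"
  shows "measure_pmf.prob (port (Suc (Suc k))) {xs. port_degree xs j = Suc e}
       = measure_pmf.prob (port (Suc k)) {xs. port_degree xs j = Suc e}
           * ((2 * real k - real e) / (2 * real k + 1))
       + measure_pmf.prob (port (Suc k)) {xs. port_degree xs j = e}
           * (real e / (2 * real k + 1))"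
proof -
  have "(\<lambda>i. xs @ [i]) -` {xs. port_degree xs j = Suc e} = {i. port_degree (xs @ [i]) j = Suc e}"
    for xs by auto
  then have "measure_pmf.prob (port (Suc (Suc k))) {xs. port_degree xs j = Suc e}
     = (\<integral>xs. indicator {xs. port_degree xs j = Suc e} xs * ((2 * real k - real e) / (2 * real k + 1))
       + indicator {xs. port_degree xs j = e} xs * (real e / (2 * real k + 1)) \<partial>port (Suc k))"
    unfolding port.simps measure_pmf_prob_bind_pmf measure_map_pmf
    by (intro integral_cong_AE) (auto simp: AE_measure_pmf_iff prob_port_degree_attach assms)
  then show ?thesis
    by (simp add: measure_pmf.emeasure_eq_measure)
qed

lemma prob_port_degree_new_node:
  assumes "2 \<le> j"
  shows "measure_pmf.prob (port j) {xs. port_degree xs j = d} = of_bool (d = 1)"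
proof -
  have "port_degree xs j = 1" if "xs \<in> set_pmf (port j)" for xs
  proof -
    have "j \<notin> set xs" using set_pmf_port(2)[OF that] assms by auto
    with assms show ?thesis by (simp add: port_degree_def port_children_def)
  qed
  then have "AE xs in port j. port_degree xs j = 1"
    by (simp add: AE_measure_pmf_iff)
  then show ?thesis
    by (cases "d = 1") (simp_all add: measure_pmf.prob_eq_1 measure_pmf.prob_eq_0 AE_measure_pmf_iff)
qed

lemma sum_binomial_absorb_comp:
  fixes a :: "nat \<Rightarrow> real"
  shows "(\<Sum>i<Suc e. real (e choose i) * (real e - real i) * a i)
       = real e * (\<Sum>i<e. real ((e - 1) choose i) * a i)"
proof -
  have absorb: "real (e choose i) * (real e - real i) = real e * real ((e - 1) choose i)"
    if "i < e" for i
    using that arg_cong[OF binomial_absorb_comp[of e i], of real]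
    by (simp add: of_nat_diff algebra_simps)
  have "(\<Sum>i<Suc e. real (e choose i) * (real e - real i) * a i)
      = (\<Sum>i<e. real (e choose i) * (real e - real i) * a i)"
    by simp
  also have "\<dots> = (\<Sum>i<e. real e * real ((e - 1) choose i) * a i)"
    by (intro sum.cong) (simp_all add: absorb)
  finally show ?thesis
    by (simp add: sum_distrib_left mult.assoc)
qed

definition degree_dist :: "nat \<Rightarrow> nat \<Rightarrow> nat \<Rightarrow> real" where
  "degree_dist j m d = Gamma (real j - 1/2) / Gamma (real m - 1/2) *
     (\<Sum>i<d. (-1)^i * real ((d - 1) choose i) * pochhammer (real j - 1 - real i / 2) (m - j))"

lemma degree_dist_zero [simp]: "degree_dist j m 0 = 0"
  by (simp add: degree_dist_def)

lemma degree_dist_same: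
  assumes "2 \<le> j"
  shows "degree_dist j j d = of_bool (d = 1)"
proof (cases d)
  case (Suc e)
  have "Gamma (real j - 1/2) > 0" using assms by (intro Gamma_real_pos) simp
  moreover have "(\<Sum>i\<le>e. (-1)^i * real (e choose i)) = of_bool (e = 0)"
    by (cases "e = 0") (simp_all add: choose_alternating_sum)
  ultimately show ?thesis
    using Suc by (simp add: degree_dist_def lessThan_Suc_atMost)
qed simp

lemma degree_dist_Suc:
  assumes "j \<le> Suc k"
  shows "degree_dist j (Suc (Suc k)) (Suc e)
       = degree_dist j (Suc k) (Suc e) * ((2 * real k - real e) / (2 * real k + 1))
       + degree_dist j (Suc k) e * (real e / (2 * real k + 1))"
proof -
  define c where "c = Gamma (real j - 1/2) / Gamma (real k + 1/2)"
  define a where "a i = (-1)^i * pochhammer (real j - 1 - real i / 2) (Suc k - j)" for i :: nat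
  have old: "degree_dist j (Suc k) d = c * (\<Sum>i<d. real ((d - 1) choose i) * a i)" for d
    by (simp add: degree_dist_def c_def a_def sum_distrib_left algebra_simps)
  have "Gamma (real k + 1/2 + 1) = (real k + 1/2) * Gamma (real k + 1/2)"
    by (rule Gamma_plus1) (use nonpos_Ints_nonpos in fastforce)
  then have Gamma_new:
    "Gamma (real (Suc (Suc k)) - 1/2) = (2 * real k + 1) / 2 * Gamma (real k + 1/2)"
    by (simp add: algebra_simps)
  have poch_new: "pochhammer (real j - 1 - real i / 2) (Suc (Suc k) - j)
      = pochhammer (real j - 1 - real i / 2) (Suc k - j) * (2 * real k - real i) / 2" for i
    using assms by (simp add: Suc_diff_le pochhammer_Suc of_nat_diff field_simps)
  have "(-1)^i * real (e choose i) * pochhammer (real j - 1 - real i / 2) (Suc (Suc k) - j)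
      = real (e choose i) * (2 * real k - real i) * a i / 2" for i
    by (simp add: poch_new a_def)
  then have "degree_dist j (Suc (Suc k)) (Suc e)
      = Gamma (real j - 1/2) / ((2 * real k + 1) / 2 * Gamma (real k + 1/2))
        * ((\<Sum>i<Suc e. real (e choose i) * (2 * real k - real i) * a i) / 2)"
    by (simp only: degree_dist_def diff_Suc_1 sum_divide_distrib Gamma_new)
  then have new: "degree_dist j (Suc (Suc k)) (Suc e)
      = c / (2 * real k + 1) * (\<Sum>i<Suc e. real (e choose i) * (2 * real k - real i) * a i)"
    unfolding c_def by (simp add: divide_simps ac_simps)
  have split: "(\<Sum>i<Suc e. real (e choose i) * (2 * real k - real i) * a i)
      = (2 * real k - real e) * (\<Sum>i<Suc e. real (e choose i) * a i)
        + real e * (\<Sum>i<e. real ((e - 1) choose i) * a i)"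
    unfolding sum_binomial_absorb_comp[symmetric]
    by (simp add: sum_distrib_left sum.distrib[symmetric] algebra_simps)
  have "c / D * (X * S + Y * S') = c * S * (X / D) + c * S' * (Y / D)" for D X Y S S' :: real
    by (simp add: algebra_simps)
  then show ?thesis
    by (simp only: new split old diff_Suc_1)
qed

lemma Gamma_rGamma_eq_binomial:
  assumes "i < d"
  shows "Gamma (real d) * rGamma (real i + 1) * rGamma (real d - real i) = real ((d - 1) choose i)"
proof -
  have "Gamma (real d) = fact (d - 1)" "rGamma (real i + 1) = inverse (fact i)"
    "rGamma (real d - real i) = inverse (fact (d - 1 - i))"
    using assms Gamma_fact[of "d - 1"] Gamma_fact[of i] Gamma_fact[of "d - 1 - i"]
    by (simp_all add: rGamma_inverse_Gamma of_nat_diff add.commute)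
  with assms show ?thesis
    by (simp add: binomial_fact field_simps)
qed

lemma Gamma_rGamma_eq_pochhammer:
  fixes z :: real
  assumes "0 < z + real n"
  shows "Gamma (z + real n) * rGamma z = pochhammer z n"
  using pochhammer_rGamma[of z n] Gamma_real_pos[OF assms] by (simp add: rGamma_inverse_Gamma)

lemma degree_dist_eq_Gamma_quotients:
  assumes "2 \<le> j" and "j \<le> n" and "1 \<le> d" and "d \<le> n - j + 1"
  shows "degree_dist j n d = Gamma (real d) * Gamma (real j - 1/2) / Gamma (real n - 1/2) *
    (\<Sum>i<d. (-1) ^ i * Gamma (real n - 1 - real i / 2) *
        rGamma (real i + 1) * rGamma (real d - real i) * rGamma (real j - 1 - real i / 2))"
proof -
  have summand: "Gamma (real d) * ((-1) ^ i * Gamma (real n - 1 - real i / 2) *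
        rGamma (real i + 1) * rGamma (real d - real i) * rGamma (real j - 1 - real i / 2))
      = (-1)^i * real ((d - 1) choose i) * pochhammer (real j - 1 - real i / 2) (n - j)"
    if "i < d" for i
  proof -
    have arg: "real j - 1 - real i / 2 + real (n - j) = real n - 1 - real i / 2"
      using assms by (simp add: of_nat_diff)
    have "0 < real n - 1 - real i / 2"
      using assms that by linarith
    with Gamma_rGamma_eq_pochhammer[of "real j - 1 - real i / 2" "n - j", unfolded arg]
    have "Gamma (real n - 1 - real i / 2) * rGamma (real j - 1 - real i / 2)
        = pochhammer (real j - 1 - real i / 2) (n - j)" .
    moreover have "Gamma (real d) * ((-1) ^ i * Gamma (real n - 1 - real i / 2) *
        rGamma (real i + 1) * rGamma (real d - real i) * rGamma (real j - 1 - real i / 2))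
      = (-1)^i * (Gamma (real d) * rGamma (real i + 1) * rGamma (real d - real i)) *
        (Gamma (real n - 1 - real i / 2) * rGamma (real j - 1 - real i / 2))"
      by (simp only: ac_simps)
    ultimately show ?thesis
      by (simp only: Gamma_rGamma_eq_binomial[OF that])
  qed
  have "Gamma (real d) * Gamma (real j - 1/2) / Gamma (real n - 1/2) *
    (\<Sum>i<d. (-1) ^ i * Gamma (real n - 1 - real i / 2) *
        rGamma (real i + 1) * rGamma (real d - real i) * rGamma (real j - 1 - real i / 2))
    = Gamma (real j - 1/2) / Gamma (real n - 1/2) *
      (\<Sum>i<d. Gamma (real d) * ((-1) ^ i * Gamma (real n - 1 - real i / 2) *
        rGamma (real i + 1) * rGamma (real d - real i) * rGamma (real j - 1 - real i / 2)))"
    unfolding sum_distrib_left[symmetric] by (simp add: ac_simps)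
  also have "\<dots> = degree_dist j n d"
    unfolding degree_dist_def by (simp add: summand)
  finally show ?thesis ..
qed

lemma prob_port_degree_eq_degree_dist:
  assumes "2 \<le> j" and "j \<le> m"
  shows "measure_pmf.prob (port m) {xs. port_degree xs j = d} = degree_dist j m d"
  using assms(2)
proof (induction m arbitrary: d rule: dec_induct)
  case base
  show ?case
    using assms(1) by (simp add: prob_port_degree_new_node degree_dist_same)
next
  case (step m)
  then obtain k where m: "m = Suc k" and j_le: "j \<le> Suc k"
    using assms(1) by (cases m) auto
  show ?case
  proof (cases d)
    case 0
    with assms(1) show ?thesis by (simp add: port_degree_def)
  next
    case (Suc e)
    show ?thesis
      using step.IH unfolding m Suc
      by (simp only: prob_port_degree_Suc[OF assms(1) j_le] degree_dist_Suc[OF j_le])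
  qed
qed

theorem proposition3p1:
  fixes n j d :: nat
  assumes "2 \<le> j" and "j \<le> n" and "1 \<le> d" and "d \<le> n - j + 1"
  shows "measure_pmf.prob (port n) {xs. port_degree xs j = d} =
    Gamma (real d) * Gamma (real j - 1/2) / Gamma (real n - 1/2) *
    (\<Sum>i<d. (-1) ^ i * Gamma (real n - 1 - real i / 2) *
        rGamma (real i + 1) * rGamma (real d - real i) * rGamma (real j - 1 - real i / 2))"
  using prob_port_degree_eq_degree_dist[OF assms(1,2)] degree_dist_eq_Gamma_quotients[OF assms]
  by simp

end
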